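(* Let $m\in\mathbb{N}$, let $\lambda_1<\lambda_2<\dots<\lambda_m$ be real numbers and $\Lambda=\operatorname{diag}(\lambda_1,\dots,\lambda_m)$. Let $G$ be a connected graph with vertex set $[m]=\{1,\dots,m\}$, let $f:E(G)\to\mathbb{N}$ be any function, and for $t\in\mathbb{R}$ let $$\mathcal M_{f,G}(t):=\{A=(a(i,j))\in S(G): a(i,j)=t^{f(\{i,j\})}\text{ for all }\{i,j\}\in E(G)\}.$$ Then for every $\epsilon>0$ there exist $t_0>0$ and a matrix $A\in\mathcal M_{f,G}(t_0)\cap\mathcal E_\Lambda$ such that $A$ has the strong spectral property and $\|A-\Lambda\|<\epsilon$.
   Context: For a simple graph $G$ on vertex set $[n]$, $S(G)$ is the set of real symmetric $n\times n$ matrices $A=(a(i,j))$ such that for $i\neq j$, $a(i,j)\neq 0$ if and only if $\{i,j\}\in E(G)$; diagonal entries are unrestricted. $\mathcal E_\Lambda$ denotes the set (smooth manifold) of all real symmetric $m\times m$ matrices whose eigenvalues are $\lambda_1,\dots,\lambda_m$. A symmetric $n\times n$ matrix $A$ has the strong spectral property (SSP) if the only real symmetric matrix $X$ with $AX=XA$, $A\circ X=0$ and $I_n\circ X=0$ is $X=0$, where $\circ$ is the entrywise (Hadamard) product. $\|\cdot\|$ is any matrix norm. *)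

theory Defs
  imports "Jordan_Normal_Form.Char_Poly"
begin

(* A simple graph on vertex set {0..<m} (0-indexed version of [m]) given by its edge set:
   a set of 2-element subsets of {0..<m}. *)
definition simple_graph :: "nat \<Rightarrow> nat set set \<Rightarrow> bool" where
  "simple_graph m E \<longleftrightarrow> E \<subseteq> {e. \<exists>i j. i < m \<and> j < m \<and> i \<noteq> j \<and> e = {i, j}}"

definition connected_graph :: "nat \<Rightarrow> nat set set \<Rightarrow> bool" where
  "connected_graph m E \<longleftrightarrow>
     (\<forall>i<m. \<forall>j<m. (i, j) \<in> {(u, v). {u, v} \<in> E}\<^sup>*)"

definition real_symmetric :: "real mat \<Rightarrow> bool" where
  "real_symmetric A \<longleftrightarrow> A\<^sup>T = A"

definition S_graph :: "nat \<Rightarrow> nat set set \<Rightarrow> real mat set" where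
  "S_graph m E = {A. A \<in> carrier_mat m m \<and> real_symmetric A \<and>
      (\<forall>i<m. \<forall>j<m. i \<noteq> j \<longrightarrow> (A $$ (i, j) \<noteq> 0 \<longleftrightarrow> {i, j} \<in> E))}"

definition M_fG :: "nat \<Rightarrow> nat set set \<Rightarrow> (nat set \<Rightarrow> nat) \<Rightarrow> real \<Rightarrow> real mat set" where
  "M_fG m E f t = {A \<in> S_graph m E.
      \<forall>i<m. \<forall>j<m. {i, j} \<in> E \<longrightarrow> A $$ (i, j) = t ^ f {i, j}}"

definition diag_of :: "nat \<Rightarrow> (nat \<Rightarrow> real) \<Rightarrow> real mat" where
  "diag_of m lam = mat m m (\<lambda>(i, j). if i = j then lam i else 0)"

(* E_Lambda: real symmetric m x m matrices whose eigenvalues (with multiplicity) are lam 0..lam (m-1),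
   i.e. whose characteristic polynomial is prod_i (x - lam i) *)
definition E_Lambda :: "nat \<Rightarrow> (nat \<Rightarrow> real) \<Rightarrow> real mat set" where
  "E_Lambda m lam = {A. A \<in> carrier_mat m m \<and> real_symmetric A \<and>
      char_poly A = (\<Prod>i<m. [:- lam i, 1:])}"

definition SSP :: "real mat \<Rightarrow> bool" where
  "SSP A \<longleftrightarrow> (\<forall>X. X \<in> carrier_mat (dim_row A) (dim_row A) \<and> real_symmetric X \<and>
      A * X = X * A \<and>
      (\<forall>i<dim_row A. \<forall>j<dim_row A. A $$ (i, j) * X $$ (i, j) = 0) \<and>
      (\<forall>i<dim_row A. X $$ (i, i) = 0) \<longrightarrow> X = 0\<^sub>m (dim_row A) (dim_row A))"

(* Frobenius norm (all matrix norms are equivalent in finite dimension) *)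
definition frob_norm :: "real mat \<Rightarrow> real" where
  "frob_norm A = sqrt (\<Sum>i<dim_row A. \<Sum>j<dim_col A. (A $$ (i, j))\<^sup>2)"

end

theory Submission
  imports Defs "HOL-Analysis.Brouwer_Fixpoint"
begin

(* For small t > 0 the weighted adjacency matrix N of G (entries t^f(e) <= t) is a small
   perturbation, and we look for A = diag(d) + N with d near (lambda_1, ..., lambda_m).
   On the cube of diagonals d_j = lambda_j + rho (2 x_j - 1), x in [0,1]^m, the function
   det(lambda_i I - A), normalised by prod_{a ~= i} (lambda_i - lambda_a), has the sign of
   lambda_i - d_i on the faces x_i = 0 and x_i = 1, because there the diagonal product dominates
   the perturbation. The Poincare-Miranda theorem, obtained from Kuhn's combinatorial lemma by
   a compactness argument, gives a common zero, and m distinct roots determine the characteristic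
   polynomial. The SSP holds because the diagonal of A is separated by about the eigenvalue gap
   while its off-diagonal entries are at most t. *)

lemma monic_poly_eq_prod_roots:
  fixes p :: "real poly"
  assumes deg: "degree p = m" and monic: "coeff p m = 1" and inj: "inj_on lam {..<m}"
    and roots: "\<And>k. k < m \<Longrightarrow> poly p (lam k) = 0"
  shows "p = (\<Prod>i<m. [:- lam i, 1:])"
proof (rule ccontr)
  define Q where "Q = (\<Prod>i<m. [:- lam i, 1:])"
  have Q: "degree Q = m" "coeff Q m = 1"
    unfolding Q_def lessThan_atLeast0 using degree_prod_monic[of m "\<lambda>i. [:- lam i, 1:]"] by auto
  assume "p \<noteq> (\<Prod>i<m. [:- lam i, 1:])"
  then have D0: "p - Q \<noteq> 0" by (simp add: Q_def)
  have "coeff (p - Q) m = 0" using monic Q by simp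
  then have "degree (p - Q) \<noteq> m" using D0 by (metis leading_coeff_0_iff)
  moreover have "degree (p - Q) \<le> m"
    using deg Q degree_diff_le[of p m Q] by simp
  moreover have "lam ` {..<m} \<subseteq> {x. poly (p - Q) x = 0}"
    using roots by (auto simp: Q_def poly_prod)
  then have "card (lam ` {..<m}) \<le> card {x. poly (p - Q) x = 0}"
    by (rule card_mono[OF poly_roots_finite[OF D0]])
  then have "m \<le> card {x. poly (p - Q) x = 0}"
    using card_image[OF inj] by simp
  ultimately show False
    using card_poly_roots_bound[OF D0] by linarith
qed

lemma char_poly_eq_prod_if_roots:
  fixes A :: "real mat"
  assumes A: "A \<in> carrier_mat m m" and inj: "inj_on lam {..<m}"
    and roots: "\<And>i. i < m \<Longrightarrow> poly (char_poly A) (lam i) = 0"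
  shows "char_poly A = (\<Prod>i<m. [:- lam i, 1:])"
  using degree_monic_char_poly[OF A] by (intro monic_poly_eq_prod_roots[OF _ _ inj roots]) auto

lemma inj_on_min_gap:
  fixes lam :: "nat \<Rightarrow> real"
  assumes inj: "inj_on lam {..<m}"
  shows "\<exists>\<delta>>0. \<forall>a<m. \<forall>b<m. a \<noteq> b \<longrightarrow> \<delta> \<le> \<bar>lam a - lam b\<bar>"
proof -
  define D where "D = (\<lambda>(a, b). \<bar>lam a - lam b\<bar>) ` {(a, b). a < m \<and> b < m \<and> a \<noteq> b}"
  have "finite {(a, b). a < m \<and> b < m \<and> a \<noteq> b}"
    by (rule finite_subset[of _ "{..<m} \<times> {..<m}"]) auto
  then have fin: "finite (insert 1 D)"
    unfolding D_def by simp
  have "\<forall>x\<in>D. 0 < x"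
    using inj unfolding D_def inj_on_def by fastforce
  then have "0 < Min (insert 1 D)"
    using fin by (simp add: Min_gr_iff)
  moreover have "Min (insert 1 D) \<le> \<bar>lam a - lam b\<bar>" if "a < m" "b < m" "a \<noteq> b" for a b
    using that by (intro Min_le[OF fin]) (auto simp: D_def)
  ultimately show ?thesis by blast
qed

lemma abs_prod_diff_le:
  fixes a b :: "'i \<Rightarrow> real"
  assumes "finite S" and B: "1 \<le> B"
    and ab: "\<And>i. i \<in> S \<Longrightarrow> \<bar>a i\<bar> \<le> B \<and> \<bar>b i\<bar> \<le> B \<and> \<bar>a i - b i\<bar> \<le> \<eta>"
  shows "\<bar>(\<Prod>i\<in>S. a i) - (\<Prod>i\<in>S. b i)\<bar> \<le> real (card S) * B ^ card S * \<eta>"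
  using assms(1) ab
proof (induction S rule: finite_induct)
  case empty
  then show ?case by simp
next
  case (insert x F)
  have x: "\<bar>a x\<bar> \<le> B" "\<bar>a x - b x\<bar> \<le> \<eta>" using insert.prems by auto
  have IH: "\<bar>(\<Prod>i\<in>F. a i) - (\<Prod>i\<in>F. b i)\<bar> \<le> real (card F) * B ^ card F * \<eta>"
    using insert by auto
  have "\<bar>\<Prod>i\<in>F. b i\<bar> \<le> B ^ card F"
    unfolding abs_prod using insert.prems B by (intro prod_le_power) auto
  then have bF: "\<bar>\<Prod>i\<in>F. b i\<bar> \<le> B ^ Suc (card F)"
    using power_increasing[of "card F" "Suc (card F)" B] B by linarith
  have "(\<Prod>i\<in>insert x F. a i) - (\<Prod>i\<in>insert x F. b i)
      = a x * ((\<Prod>i\<in>F. a i) - (\<Prod>i\<in>F. b i)) + (a x - b x) * (\<Prod>i\<in>F. b i)"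
    using insert.hyps by (simp add: algebra_simps)
  also have "\<bar>\<dots>\<bar> \<le> \<bar>a x\<bar> * \<bar>(\<Prod>i\<in>F. a i) - (\<Prod>i\<in>F. b i)\<bar> + \<bar>a x - b x\<bar> * \<bar>\<Prod>i\<in>F. b i\<bar>"
    by (simp add: abs_mult[symmetric] abs_triangle_ineq)
  also have "\<dots> \<le> B * (real (card F) * B ^ card F * \<eta>) + \<eta> * B ^ Suc (card F)"
    using x IH bF B by (intro add_mono mult_mono) auto
  also have "\<dots> = real (card (insert x F)) * B ^ card (insert x F) * \<eta>"
    using insert.hyps by (simp add: algebra_simps)
  finally show ?case .
qed

lemma abs_det_add_diff_le:
  fixes M P :: "real mat"
  assumes M: "M \<in> carrier_mat m m" and P: "P \<in> carrier_mat m m" and B: "1 \<le> B"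
    and bounds: "\<And>i j. i < m \<Longrightarrow> j < m \<Longrightarrow>
      \<bar>M $$ (i, j)\<bar> \<le> B \<and> \<bar>M $$ (i, j) + P $$ (i, j)\<bar> \<le> B \<and> \<bar>P $$ (i, j)\<bar> \<le> \<eta>"
  shows "\<bar>det (M + P) - det M\<bar> \<le> fact m * (real m * B ^ m * \<eta>)"
proof -
  let ?Perm = "{p. p permutes {0..<m}}"
  let ?term = "\<lambda>A p. signof p * (\<Prod>i=0..<m. A $$ (i, p i))"
  have "\<bar>det (M + P) - det M\<bar> = \<bar>\<Sum>p\<in>?Perm. ?term (M + P) p - ?term M p\<bar>"
    using M P by (simp add: det_def'[of _ m] sum_subtractf)
  also have "\<dots> \<le> (\<Sum>p\<in>?Perm. \<bar>?term (M + P) p - ?term M p\<bar>)"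
    by (rule sum_abs)
  also have "\<dots> \<le> (\<Sum>p\<in>?Perm. real m * B ^ m * \<eta>)"
  proof (rule sum_mono)
    fix p assume "p \<in> ?Perm"
    then have p: "p i < m" if "i < m" for i
      using that permutes_in_image[of p "{0..<m}" i] by simp
    have "\<bar>(\<Prod>i=0..<m. (M + P) $$ (i, p i)) - (\<Prod>i=0..<m. M $$ (i, p i))\<bar>
        \<le> real (card {0..<m}) * B ^ card {0..<m} * \<eta>"
      using M P bounds p by (intro abs_prod_diff_le B) auto
    then show "\<bar>?term (M + P) p - ?term M p\<bar> \<le> real m * B ^ m * \<eta>"
      by (simp add: right_diff_distrib[symmetric] abs_mult sign_def)
  qed
  also have "\<dots> = fact m * (real m * B ^ m * \<eta>)"
    using card_permutations[of "{0..<m}" m] by simp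
  finally show ?thesis .
qed

lemma dim_diag_of [simp]: "dim_row (diag_of m c) = m" "dim_col (diag_of m c) = m"
  by (simp_all add: diag_of_def)

lemma index_diag_of: "i < m \<Longrightarrow> j < m \<Longrightarrow> diag_of m c $$ (i, j) = (if i = j then c i else 0)"
  by (simp add: diag_of_def)

lemma det_diag_of: "det (diag_of m c) = (\<Prod>i<m. c i)"
proof -
  have "det (diag_of m c) = prod_list (map c [0..<m])"
    by (subst det_upper_triangular[of _ m])
       (auto simp: diag_of_def upper_triangular_def diag_mat_def intro!: arg_cong[of _ _ prod_list])
  then show ?thesis
    by (simp add: prod.distinct_set_conv_list[symmetric] atLeast0LessThan)
qed

lemma abs_det_diag_of_add_diff_le:
  fixes P :: "real mat"
  assumes P: "P \<in> carrier_mat m m" and B: "1 \<le> B"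
    and c: "\<And>i. i < m \<Longrightarrow> \<bar>c i\<bar> + \<eta> \<le> B"
    and Pb: "\<And>i j. i < m \<Longrightarrow> j < m \<Longrightarrow> \<bar>P $$ (i, j)\<bar> \<le> \<eta>"
  shows "\<bar>det (diag_of m c + P) - (\<Prod>i<m. c i)\<bar> \<le> fact m * (real m * B ^ m * \<eta>)"
proof -
  have "\<bar>det (diag_of m c + P) - det (diag_of m c)\<bar> \<le> fact m * (real m * B ^ m * \<eta>)"
  proof (rule abs_det_add_diff_le[OF _ P B])
    fix i j assume ij: "i < m" "j < m"
    then show "\<bar>diag_of m c $$ (i, j)\<bar> \<le> B \<and> \<bar>diag_of m c $$ (i, j) + P $$ (i, j)\<bar> \<le> B \<and>
        \<bar>P $$ (i, j)\<bar> \<le> \<eta>"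
      using c[of i] c[of j] Pb[of i j] Pb[of i i] Pb[of j j] B by (auto simp: diag_of_def)
  qed (simp add: diag_of_def)
  then show ?thesis by (simp add: det_diag_of)
qed

lemma tendsto_det:
  fixes F :: "nat \<Rightarrow> real mat"
  assumes F: "\<And>k. F k \<in> carrier_mat m m" and G: "G \<in> carrier_mat m m"
    and lim: "\<And>i j. i < m \<Longrightarrow> j < m \<Longrightarrow> (\<lambda>k. F k $$ (i, j)) \<longlonglongrightarrow> G $$ (i, j)"
  shows "(\<lambda>k. det (F k)) \<longlonglongrightarrow> det G"
  unfolding det_def'[OF F] det_def'[OF G]
proof (intro tendsto_sum tendsto_mult tendsto_const tendsto_prod)
  fix p i assume "p \<in> {p. p permutes {0..<m}}" "i \<in> {0..<m}"
  then show "(\<lambda>k. F k $$ (i, p i)) \<longlonglongrightarrow> G $$ (i, p i)"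
    using lim permutes_in_image[of p "{0..<m}" i] by auto
qed

lemma poly_char_poly_diag_of_add:
  fixes N :: "real mat"
  assumes N: "N \<in> carrier_mat m m"
  shows "poly (char_poly (diag_of m d + N)) x = det (diag_of m (\<lambda>i. x - d i) + - N)"
proof -
  have "- char_matrix (diag_of m d + N) x = diag_of m (\<lambda>i. x - d i) + - N"
    using N by (intro eq_matI) (auto simp: char_matrix_def diag_of_def)
  moreover have "diag_of m d + N \<in> carrier_mat m m" using N by (simp add: diag_of_def)
  ultimately show ?thesis by (simp add: char_poly_matrix)
qed

lemma abs_prod_mult_half_power_le:
  fixes u v :: "'a \<Rightarrow> real"
  assumes S: "finite S" and \<delta>: "0 \<le> \<delta>"
    and u: "\<And>a. a \<in> S \<Longrightarrow> \<delta> \<le> \<bar>u a\<bar>" and v: "\<And>a. a \<in> S \<Longrightarrow> \<bar>v a - u a\<bar> \<le> \<delta> / 2"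
  shows "\<bar>\<Prod>a\<in>S. u a\<bar> * (\<delta> / 2) ^ card S \<le> (\<Prod>a\<in>S. u a) * (\<Prod>a\<in>S. v a)"
proof -
  have "\<bar>u a\<bar> * (\<delta> / 2) \<le> u a * v a" if "a \<in> S" for a
  proof (cases "0 \<le> u a")
    case True
    then have "\<delta> / 2 \<le> v a" using u[OF that] v[OF that] by linarith
    then show ?thesis using mult_left_mono[of "\<delta> / 2" "v a" "u a"] True by simp
  next
    case False
    then have "v a \<le> - (\<delta> / 2)" using u[OF that] v[OF that] by linarith
    then show ?thesis using mult_left_mono_neg[of "v a" "- (\<delta> / 2)" "u a"] False by simp
  qed
  then have "(\<Prod>a\<in>S. \<bar>u a\<bar> * (\<delta> / 2)) \<le> (\<Prod>a\<in>S. u a * v a)"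
    using \<delta> by (intro prod_mono) auto
  then show ?thesis
    by (simp only: abs_prod prod.distrib prod_constant)
qed

text \<open>The factors with \<open>a \<noteq> i\<close> have the signs of \<open>\<lambda>\<^sub>i - \<lambda>\<^sub>a\<close>, so after normalisation
  by their product only the sign of \<open>\<lambda>\<^sub>i - c\<^sub>i\<close> survives.\<close>

lemma sign_det_perturbed_diag_of:
  fixes lam c :: "nat \<Rightarrow> real" and P :: "real mat"
  assumes i: "i < m" and \<delta>: "0 < \<delta>"
    and gap: "\<And>a b. a < m \<Longrightarrow> b < m \<Longrightarrow> a \<noteq> b \<Longrightarrow> \<delta> \<le> \<bar>lam a - lam b\<bar>"
    and near: "\<And>a. a < m \<Longrightarrow> \<bar>c a - lam a\<bar> \<le> \<delta> / 2"
    and P: "P \<in> carrier_mat m m" "\<And>a b. a < m \<Longrightarrow> b < m \<Longrightarrow> \<bar>P $$ (a, b)\<bar> \<le> \<eta>"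
    and B: "1 \<le> B" "\<And>a. a < m \<Longrightarrow> \<bar>lam i - c a\<bar> + \<eta> \<le> B"
    and small: "fact m * (real m * B ^ m * \<eta>) < \<bar>lam i - c i\<bar> * (\<delta> / 2) ^ (m - 1)"
  shows "0 < (lam i - c i) * ((\<Prod>a\<in>{..<m} - {i}. lam i - lam a) * det (diag_of m (\<lambda>a. lam i - c a) + P))"
proof -
  define s where "s = lam i - c i"
  define p where "p = (\<Prod>a\<in>{..<m} - {i}. lam i - lam a)"
  define q where "q = (\<Prod>a\<in>{..<m} - {i}. lam i - c a)"
  define D where "D = det (diag_of m (\<lambda>a. lam i - c a) + P)"
  define e where "e = fact m * (real m * B ^ m * \<eta>)"
  have "(\<Prod>a<m. lam i - c a) = s * q"
    using i by (simp add: s_def q_def prod.remove)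
  then have err: "\<bar>D - s * q\<bar> \<le> e"
    unfolding D_def e_def using abs_det_diag_of_add_diff_le[of P m B "\<lambda>a. lam i - c a" \<eta>] P B by simp
  have "0 \<le> e" using err by linarith
  have "lam i - lam a \<noteq> 0" if "a \<in> {..<m} - {i}" for a
    using gap[of i a] that i \<delta> by auto
  then have "p \<noteq> 0" by (simp add: p_def)
  have "\<bar>p\<bar> * (\<delta> / 2) ^ card ({..<m} - {i}) \<le> p * q"
    unfolding p_def q_def using i gap near \<delta>
    by (intro abs_prod_mult_half_power_le) (auto simp: abs_minus_commute)
  then have "\<bar>p\<bar> * (\<delta> / 2) ^ (m - 1) \<le> p * q"
    using i by simp
  then have "\<bar>s\<bar> * \<bar>s\<bar> * (\<bar>p\<bar> * (\<delta> / 2) ^ (m - 1)) \<le> (s * s) * (p * q)"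
    by (simp add: abs_mult_self_eq mult_left_mono)
  moreover have "\<bar>s * p * (D - s * q)\<bar> \<le> \<bar>s\<bar> * \<bar>p\<bar> * e"
    unfolding abs_mult using err by (simp add: mult_left_mono)
  moreover have "\<bar>s\<bar> * \<bar>p\<bar> * e < \<bar>s\<bar> * \<bar>p\<bar> * (\<bar>s\<bar> * (\<delta> / 2) ^ (m - 1))"
  proof (rule mult_strict_left_mono)
    show "e < \<bar>s\<bar> * (\<delta> / 2) ^ (m - 1)" using small by (simp add: e_def s_def)
    then have "s \<noteq> 0" using \<open>0 \<le> e\<close> by auto
    then show "0 < \<bar>s\<bar> * \<bar>p\<bar>" using \<open>p \<noteq> 0\<close> by simp
  qed
  moreover have "s * p * D = (s * s) * (p * q) + s * p * (D - s * q)"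
    by (simp add: algebra_simps)
  ultimately have "0 < s * p * D"
    by (smt (verit) mult.assoc mult.commute)
  then show ?thesis by (simp add: s_def p_def D_def mult.assoc)
qed

lemma bounded_imp_coordinatewise_convergent_subseq:
  fixes X :: "nat \<Rightarrow> nat \<Rightarrow> real"
  assumes "\<And>k j. j < n \<Longrightarrow> \<bar>X k j\<bar> \<le> B"
  shows "\<exists>\<sigma> L. strict_mono \<sigma> \<and> (\<forall>j<n. (\<lambda>k. X (\<sigma> k) j) \<longlonglongrightarrow> L j)"
  using assms
proof (induction n)
  case 0
  show ?case by (auto intro: strict_mono_id)
next
  case (Suc n)
  then obtain \<sigma> L where \<sigma>: "strict_mono \<sigma>" and L: "\<forall>j<n. (\<lambda>k. X (\<sigma> k) j) \<longlonglongrightarrow> L j"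
    by auto
  have "bounded (range (\<lambda>k. X (\<sigma> k) n))"
    unfolding bounded_real using Suc.prems[of n] by auto
  then obtain l r where r: "strict_mono r" and l: "((\<lambda>k. X (\<sigma> k) n) \<circ> r) \<longlonglongrightarrow> l"
    using bounded_imp_convergent_subsequence by blast
  have "(\<lambda>k. X ((\<sigma> \<circ> r) k) j) \<longlonglongrightarrow> (L(n := l)) j" if "j < Suc n" for j
    using l LIMSEQ_subseq_LIMSEQ[OF _ r, of "\<lambda>k. X (\<sigma> k) j"] L that
    by (cases "j = n") (auto simp: comp_def)
  moreover have "strict_mono (\<sigma> \<circ> r)"
    using \<sigma> r by (simp add: strict_mono_def)
  ultimately show ?case by blast
qed

lemma kuhn_sign_change_cell:
  fixes h :: "nat \<Rightarrow> (nat \<Rightarrow> real) \<Rightarrow> real" and n p :: nat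
  assumes p: "0 < p"
    and pos: "\<And>i x. i < n \<Longrightarrow> (\<And>j. j < n \<Longrightarrow> 0 \<le> x j \<and> x j \<le> 1) \<Longrightarrow> x i = 0 \<Longrightarrow> 0 < h i x"
    and neg: "\<And>i x. i < n \<Longrightarrow> (\<And>j. j < n \<Longrightarrow> 0 \<le> x j \<and> x j \<le> 1) \<Longrightarrow> x i = 1 \<Longrightarrow> h i x < 0"
  obtains q :: "nat \<Rightarrow> nat" where "\<forall>i<n. q i < p"
    and "\<forall>i<n. \<exists>u v :: nat \<Rightarrow> nat. (\<forall>j<n. q j \<le> u j \<and> u j \<le> q j + 1) \<and>
           (\<forall>j<n. q j \<le> v j \<and> v j \<le> q j + 1) \<and>
           0 < h i (\<lambda>j. real (u j) / real p) \<and> h i (\<lambda>j. real (v j) / real p) \<le> 0"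
proof -
  define label :: "(nat \<Rightarrow> nat) \<Rightarrow> nat \<Rightarrow> nat"
    where "label x i = (if 0 < h i (\<lambda>j. real (x j) / real p) then 0 else 1)" for x i
  have cube: "0 \<le> real (x j) / real p \<and> real (x j) / real p \<le> 1"
    if "\<forall>i<n. x i \<le> p" "j < n" for x :: "nat \<Rightarrow> nat" and j
    using that p by (auto simp: field_simps)
  obtain q where q: "\<forall>i<n. q i < p"
    and cell: "\<forall>i<n. \<exists>u v. (\<forall>j<n. q j \<le> u j \<and> u j \<le> q j + 1) \<and>
                 (\<forall>j<n. q j \<le> v j \<and> v j \<le> q j + 1) \<and> label u i \<noteq> label v i"
  proof (rule kuhn_lemma[OF p])
    show "\<forall>x. (\<forall>i<n. x i \<le> p) \<longrightarrow> (\<forall>i<n. label x i = 0 \<or> label x i = 1)"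
      by (auto simp: label_def)
    show "\<forall>x. (\<forall>i<n. x i \<le> p) \<longrightarrow> (\<forall>i<n. x i = 0 \<longrightarrow> label x i = 0)"
    proof (intro allI impI)
      fix x i assume x: "\<forall>i<n. x i \<le> p" and "i < n" "x i = 0"
      have "0 < h i (\<lambda>j. real (x j) / real p)"
        using cube[OF x] \<open>i < n\<close> \<open>x i = 0\<close> by (intro pos) auto
      then show "label x i = 0" by (simp add: label_def)
    qed
    show "\<forall>x. (\<forall>i<n. x i \<le> p) \<longrightarrow> (\<forall>i<n. x i = p \<longrightarrow> label x i = 1)"
    proof (intro allI impI)
      fix x i assume x: "\<forall>i<n. x i \<le> p" and "i < n" "x i = p"
      have "h i (\<lambda>j. real (x j) / real p) < 0"
        using cube[OF x] \<open>i < n\<close> \<open>x i = p\<close> p by (intro neg) auto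
      then show "label x i = 1" by (simp add: label_def)
    qed
  qed blast
  have "\<exists>u v :: nat \<Rightarrow> nat. (\<forall>j<n. q j \<le> u j \<and> u j \<le> q j + 1) \<and> (\<forall>j<n. q j \<le> v j \<and> v j \<le> q j + 1) \<and>
          0 < h i (\<lambda>j. real (u j) / real p) \<and> h i (\<lambda>j. real (v j) / real p) \<le> 0"
    if "i < n" for i
  proof -
    obtain u v where uv: "\<forall>j<n. q j \<le> u j \<and> u j \<le> q j + 1" "\<forall>j<n. q j \<le> v j \<and> v j \<le> q j + 1"
      and "label u i \<noteq> label v i"
      using cell \<open>i < n\<close> by blast
    then consider "0 < h i (\<lambda>j. real (u j) / real p)" "h i (\<lambda>j. real (v j) / real p) \<le> 0"
      | "0 < h i (\<lambda>j. real (v j) / real p)" "h i (\<lambda>j. real (u j) / real p) \<le> 0"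
      by (auto simp: label_def split: if_splits)
    then show ?thesis using uv by cases blast+
  qed
  with q show ?thesis by (intro that) auto
qed

lemma tendsto_grid_neighbour:
  fixes q u s :: "nat \<Rightarrow> nat"
  assumes q: "(\<lambda>k. real (q k) / real (s k)) \<longlonglongrightarrow> L" and mesh: "(\<lambda>k. 1 / real (s k)) \<longlonglongrightarrow> 0"
    and u: "\<And>k. q k \<le> u k \<and> u k \<le> q k + 1"
  shows "(\<lambda>k. real (u k) / real (s k)) \<longlonglongrightarrow> L"
proof -
  define e where "e k = real (u k) / real (s k) - real (q k) / real (s k)" for k
  have "0 \<le> e k \<and> e k \<le> 1 / real (s k)" for k
    using u[of k] by (auto simp: e_def diff_divide_distrib[symmetric] divide_right_mono)
  then have "e \<longlonglongrightarrow> 0"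
    by (intro tendsto_sandwich[OF _ _ tendsto_const mesh]) auto
  from tendsto_add[OF this q] show ?thesis by (simp add: e_def)
qed

lemma poincare_miranda:
  fixes h :: "nat \<Rightarrow> (nat \<Rightarrow> real) \<Rightarrow> real" and n :: nat
  assumes cont: "\<And>i X L. i < n \<Longrightarrow> (\<And>j. j < n \<Longrightarrow> (\<lambda>k. X k j) \<longlonglongrightarrow> L j) \<Longrightarrow>
      (\<lambda>k. h i (X k)) \<longlonglongrightarrow> h i L"
    and pos: "\<And>i x. i < n \<Longrightarrow> (\<And>j. j < n \<Longrightarrow> 0 \<le> x j \<and> x j \<le> 1) \<Longrightarrow> x i = 0 \<Longrightarrow> 0 < h i x"
    and neg: "\<And>i x. i < n \<Longrightarrow> (\<And>j. j < n \<Longrightarrow> 0 \<le> x j \<and> x j \<le> 1) \<Longrightarrow> x i = 1 \<Longrightarrow> h i x < 0"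
  shows "\<exists>x. (\<forall>j<n. 0 \<le> x j \<and> x j \<le> 1) \<and> (\<forall>i<n. h i x = 0)"
proof -
  define cell where "cell q u \<longleftrightarrow> (\<forall>j<n. q j \<le> u j \<and> u j \<le> q j + 1)" for q u :: "nat \<Rightarrow> nat"
  define grid where "grid k u = (\<lambda>j. real (u j) / real (Suc k))" for k and u :: "nat \<Rightarrow> nat"
  have "\<exists>q. (\<forall>i<n. q i < Suc k) \<and>
      (\<forall>i<n. \<exists>u v. cell q u \<and> cell q v \<and> 0 < h i (grid k u) \<and> h i (grid k v) \<le> 0)" for k
  proof -
    obtain q :: "nat \<Rightarrow> nat" where q: "\<forall>i<n. q i < Suc k"
      and sign: "\<forall>i<n. \<exists>u v :: nat \<Rightarrow> nat. (\<forall>j<n. q j \<le> u j \<and> u j \<le> q j + 1) \<and>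
           (\<forall>j<n. q j \<le> v j \<and> v j \<le> q j + 1) \<and>
           0 < h i (\<lambda>j. real (u j) / real (Suc k)) \<and> h i (\<lambda>j. real (v j) / real (Suc k)) \<le> 0"
      by (rule kuhn_sign_change_cell[OF zero_less_Suc pos neg])
    show ?thesis unfolding cell_def grid_def by (intro exI[of _ q] conjI q sign)
  qed
  then obtain Q where Q: "\<And>k. (\<forall>i<n. Q k i < Suc k) \<and>
      (\<forall>i<n. \<exists>u v. cell (Q k) u \<and> cell (Q k) v \<and> 0 < h i (grid k u) \<and> h i (grid k v) \<le> 0)"
    by metis
  have "\<forall>k i. \<exists>w. i < n \<longrightarrow> cell (Q k) (fst w) \<and> cell (Q k) (snd w) \<and>
      0 < h i (grid k (fst w)) \<and> h i (grid k (snd w)) \<le> 0"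
    using Q by fastforce
  then obtain W where W: "\<And>k i. i < n \<Longrightarrow> cell (Q k) (fst (W k i)) \<and> cell (Q k) (snd (W k i)) \<and>
      0 < h i (grid k (fst (W k i))) \<and> h i (grid k (snd (W k i))) \<le> 0"
    by metis
  have Q01: "\<bar>grid k (Q k) j\<bar> \<le> 1 \<and> 0 \<le> grid k (Q k) j \<and> grid k (Q k) j \<le> 1" if "j < n" for k j
  proof -
    have "Q k j < Suc k" using Q[of k] that by blast
    then show ?thesis by (simp add: grid_def field_simps)
  qed
  then obtain \<sigma> L where \<sigma>: "strict_mono \<sigma>"
    and L: "\<forall>j<n. (\<lambda>k. grid (\<sigma> k) (Q (\<sigma> k)) j) \<longlonglongrightarrow> L j"
    using bounded_imp_coordinatewise_convergent_subseq[of n "\<lambda>k. grid k (Q k)" 1] by blast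
  have mesh: "(\<lambda>k. 1 / real (Suc (\<sigma> k))) \<longlonglongrightarrow> 0"
    using LIMSEQ_subseq_LIMSEQ[OF LIMSEQ_Suc[OF lim_1_over_n] \<sigma>] by (simp add: comp_def)
  have corners: "(\<lambda>k. grid (\<sigma> k) (U k) j) \<longlonglongrightarrow> L j"
    if "j < n" and U: "\<And>k. cell (Q (\<sigma> k)) (U k)" for U j
    using tendsto_grid_neighbour[OF _ mesh, of "\<lambda>k. Q (\<sigma> k) j"] L U \<open>j < n\<close>
    by (simp add: grid_def cell_def)
  show ?thesis
  proof (intro exI conjI allI impI)
    fix j assume j: "j < n"
    show "0 \<le> L j" by (rule LIMSEQ_le_const[OF L[rule_format, OF j]]) (use Q01[OF j] in auto)
    show "L j \<le> 1" by (rule LIMSEQ_le_const2[OF L[rule_format, OF j]]) (use Q01[OF j] in auto)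
  next
    fix i assume i: "i < n"
    have "(\<lambda>k. h i (grid (\<sigma> k) (fst (W (\<sigma> k) i)))) \<longlonglongrightarrow> h i L"
      using W[OF i] by (intro cont[OF i] corners) auto
    then have "0 \<le> h i L"
      using W[OF i] by (intro LIMSEQ_le_const) (auto intro: less_imp_le)
    moreover have "(\<lambda>k. h i (grid (\<sigma> k) (snd (W (\<sigma> k) i)))) \<longlonglongrightarrow> h i L"
      using W[OF i] by (intro cont[OF i] corners) auto
    then have "h i L \<le> 0"
      using W[OF i] by (intro LIMSEQ_le_const2) auto
    ultimately show "h i L = 0" by simp
  qed
qed

lemma exists_diag_with_char_poly_roots:
  fixes lam :: "nat \<Rightarrow> real" and N :: "real mat"
  assumes \<delta>: "0 < \<delta>" and gap: "\<And>a b. a < m \<Longrightarrow> b < m \<Longrightarrow> a \<noteq> b \<Longrightarrow> \<delta> \<le> \<bar>lam a - lam b\<bar>"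
    and \<rho>: "0 < \<rho>" "\<rho> \<le> \<delta> / 2"
    and N: "N \<in> carrier_mat m m" "\<And>i j. i < m \<Longrightarrow> j < m \<Longrightarrow> \<bar>N $$ (i, j)\<bar> \<le> \<eta>"
    and B: "1 \<le> B" "\<And>i j. i < m \<Longrightarrow> j < m \<Longrightarrow> \<bar>lam i\<bar> + \<bar>lam j\<bar> + \<rho> + \<eta> \<le> B"
    and small: "fact m * (real m * B ^ m * \<eta>) < \<rho> * (\<delta> / 2) ^ (m - 1)"
  shows "\<exists>d. (\<forall>j<m. \<bar>d j - lam j\<bar> \<le> \<rho>) \<and> (\<forall>i<m. poly (char_poly (diag_of m d + N)) (lam i) = 0)"
proof -
  define dd where "dd x j = lam j + \<rho> * (2 * x j - 1)" for x :: "nat \<Rightarrow> real" and j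
  define h where "h i x = (\<Prod>a\<in>{..<m} - {i}. lam i - lam a) * det (diag_of m (\<lambda>a. lam i - dd x a) + - N)"
    for i x
  have dd: "\<bar>dd x j - lam j\<bar> \<le> \<rho>" if "0 \<le> x j" "x j \<le> 1" for x j
  proof -
    have "\<bar>2 * x j - 1\<bar> \<le> 1" using that by simp
    then show ?thesis using \<rho>(1) by (simp add: dd_def abs_mult mult_left_le)
  qed
  have sign: "0 < (lam i - dd x i) * h i x"
    if i: "i < m" and x: "\<And>j. j < m \<Longrightarrow> 0 \<le> x j \<and> x j \<le> 1" and "x i = 0 \<or> x i = 1" for i x
    unfolding h_def
  proof (rule sign_det_perturbed_diag_of[OF i \<delta> gap _ _ _ B(1)])
    show "\<bar>dd x a - lam a\<bar> \<le> \<delta> / 2" if "a < m" for a using dd x[OF that] \<rho> by force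
    show "- N \<in> carrier_mat m m" using N by simp
    show "\<bar>(- N) $$ (a, b)\<bar> \<le> \<eta>" if "a < m" "b < m" for a b using N that by simp
    show "\<bar>lam i - dd x a\<bar> + \<eta> \<le> B" if "a < m" for a
    proof -
      have "\<bar>dd x a - lam a\<bar> \<le> \<rho>" using dd x[OF that] by blast
      then show ?thesis using B(2)[OF i that] by linarith
    qed
    have "\<bar>lam i - dd x i\<bar> = \<rho>" using \<open>x i = 0 \<or> x i = 1\<close> \<rho> by (auto simp: dd_def)
    then show "fact m * (real m * B ^ m * \<eta>) < \<bar>lam i - dd x i\<bar> * (\<delta> / 2) ^ (m - 1)"
      using small by simp
  qed
  have "\<exists>x. (\<forall>j<m. 0 \<le> x j \<and> x j \<le> 1) \<and> (\<forall>i<m. h i x = 0)"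
  proof (rule poincare_miranda)
    fix i and X :: "nat \<Rightarrow> nat \<Rightarrow> real" and L
    assume "i < m" and lim: "\<And>j. j < m \<Longrightarrow> (\<lambda>k. X k j) \<longlonglongrightarrow> L j"
    have "(\<lambda>k. det (diag_of m (\<lambda>a. lam i - dd (X k) a) + - N)) \<longlonglongrightarrow>
        det (diag_of m (\<lambda>a. lam i - dd L a) + - N)"
      using N lim by (intro tendsto_det[of _ m]) (auto simp: diag_of_def dd_def intro!: tendsto_intros)
    then show "(\<lambda>k. h i (X k)) \<longlonglongrightarrow> h i L"
      unfolding h_def by (rule tendsto_mult_left)
  next
    fix i and x :: "nat \<Rightarrow> real" assume "i < m" "\<And>j. j < m \<Longrightarrow> 0 \<le> x j \<and> x j \<le> 1" "x i = 0"
    then show "0 < h i x" using sign[of i x] \<rho> by (simp add: dd_def zero_less_mult_iff)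
  next
    fix i and x :: "nat \<Rightarrow> real" assume "i < m" "\<And>j. j < m \<Longrightarrow> 0 \<le> x j \<and> x j \<le> 1" "x i = 1"
    then show "h i x < 0" using sign[of i x] \<rho> by (simp add: dd_def mult_less_0_iff)
  qed
  then obtain x where x: "\<forall>j<m. 0 \<le> x j \<and> x j \<le> 1" and zero: "\<forall>i<m. h i x = 0" by blast
  show ?thesis
  proof (intro exI[of _ "dd x"] conjI allI impI)
    fix j assume "j < m"
    then show "\<bar>dd x j - lam j\<bar> \<le> \<rho>" using dd[of x j] x by auto
  next
    fix i assume i: "i < m"
    have "lam i - lam a \<noteq> 0" if "a \<in> {..<m} - {i}" for a
      using gap[of i a] that i \<delta> by auto
    then have "(\<Prod>a\<in>{..<m} - {i}. lam i - lam a) \<noteq> 0" by simp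
    moreover have "h i x = 0" using zero i by blast
    ultimately show "poly (char_poly (diag_of m (dd x) + N)) (lam i) = 0"
      by (simp add: h_def poly_char_poly_diag_of_add[OF N(1)])
  qed
qed

lemma uniform_exists_diag_with_char_poly_roots:
  fixes lam :: "nat \<Rightarrow> real"
  assumes inj: "inj_on lam {..<m}" and r: "0 < r"
  shows "\<exists>\<eta>>0. \<forall>N \<in> carrier_mat m m. (\<forall>i<m. \<forall>j<m. \<bar>N $$ (i, j)\<bar> \<le> \<eta>) \<longrightarrow>
           (\<exists>d. (\<forall>j<m. \<bar>d j - lam j\<bar> \<le> r) \<and> (\<forall>i<m. poly (char_poly (diag_of m d + N)) (lam i) = 0))"
proof -
  obtain \<delta> where \<delta>: "0 < \<delta>" and gap: "\<And>a b. a < m \<Longrightarrow> b < m \<Longrightarrow> a \<noteq> b \<Longrightarrow> \<delta> \<le> \<bar>lam a - lam b\<bar>"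
    using inj_on_min_gap[OF inj] by blast
  define \<rho> where "\<rho> = min r (min 1 (\<delta> / 2))"
  have \<rho>: "0 < \<rho>" "\<rho> \<le> r" "\<rho> \<le> 1" "\<rho> \<le> \<delta> / 2" using r \<delta> by (auto simp: \<rho>_def)
  define B where "B = 2 * (\<Sum>i<m. \<bar>lam i\<bar>) + 2"
  have "1 \<le> B" by (simp add: B_def sum_nonneg)
  define K where "K = fact m * (real m * B ^ m)"
  have "0 \<le> K" using \<open>1 \<le> B\<close> by (simp add: K_def)
  define c where "c = \<rho> * (\<delta> / 2) ^ (m - 1)"
  have "0 < c" using \<rho> \<delta> by (simp add: c_def)
  define \<eta> where "\<eta> = min 1 (c / (2 * (K + 1)))"
  have \<eta>: "0 < \<eta>" "\<eta> \<le> 1" "K * \<eta> < c"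
  proof -
    have "K * \<eta> \<le> (K + 1) * (c / (2 * (K + 1)))"
      unfolding \<eta>_def using \<open>0 \<le> K\<close> \<open>0 < c\<close> by (intro mult_mono) auto
    also have "\<dots> < c" using \<open>0 \<le> K\<close> \<open>0 < c\<close> by (simp add: field_simps add_pos_nonneg)
    finally show "K * \<eta> < c" .
    show "0 < \<eta>" "\<eta> \<le> 1" using \<open>0 \<le> K\<close> \<open>0 < c\<close> by (auto simp: \<eta>_def)
  qed
  have B_bound: "\<bar>lam i\<bar> + \<bar>lam j\<bar> + \<rho> + \<eta> \<le> B" if "i < m" "j < m" for i j
    using member_le_sum[of i "{..<m}" "\<lambda>i. \<bar>lam i\<bar>"] member_le_sum[of j "{..<m}" "\<lambda>i. \<bar>lam i\<bar>"]
      that \<rho> \<eta> by (simp add: B_def)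
  have "\<exists>d. (\<forall>j<m. \<bar>d j - lam j\<bar> \<le> \<rho>) \<and> (\<forall>i<m. poly (char_poly (diag_of m d + N)) (lam i) = 0)"
    if "N \<in> carrier_mat m m" "\<forall>i<m. \<forall>j<m. \<bar>N $$ (i, j)\<bar> \<le> \<eta>" for N
    using \<eta>(3) that
    by (intro exists_diag_with_char_poly_roots[OF \<delta> gap \<rho>(1,4) _ _ \<open>1 \<le> B\<close> B_bound])
       (auto simp: K_def c_def mult.assoc)
  then show ?thesis using \<eta>(1) \<rho>(2) by (meson order_trans)
qed

lemma frob_norm_le:
  fixes A :: "real mat"
  assumes "A \<in> carrier_mat m m" "0 \<le> r" "\<And>i j. i < m \<Longrightarrow> j < m \<Longrightarrow> \<bar>A $$ (i, j)\<bar> \<le> r"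
  shows "frob_norm A \<le> real m * r"
proof -
  have "(\<Sum>i<m. \<Sum>j<m. (A $$ (i, j))\<^sup>2) \<le> (\<Sum>i<m. \<Sum>j<m. r\<^sup>2)"
    using assms by (intro sum_mono power2_le_iff_abs_le[THEN iffD2]) auto
  also have "\<dots> = (real m * r)\<^sup>2" by (simp add: power2_eq_square)
  finally have "sqrt (\<Sum>i<m. \<Sum>j<m. (A $$ (i, j))\<^sup>2) \<le> sqrt ((real m * r)\<^sup>2)"
    by (rule real_sqrt_le_mono)
  then show ?thesis using assms(1,2) by (simp add: frob_norm_def)
qed

lemma abs_sum_minus_term_le:
  fixes c :: "'a \<Rightarrow> real"
  assumes S: "finite S" "a \<in> S" and K: "0 \<le> K" and c: "\<And>l. l \<in> S \<Longrightarrow> l \<noteq> a \<Longrightarrow> \<bar>c l\<bar> \<le> K"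
  shows "\<bar>sum c S - c a\<bar> \<le> real (card S) * K"
proof -
  have "\<bar>sum c S - c a\<bar> = \<bar>\<Sum>l\<in>S - {a}. c l\<bar>"
    using S by (simp add: sum_diff1)
  also have "\<dots> \<le> (\<Sum>l\<in>S - {a}. K)"
    using c by (intro order_trans[OF sum_abs] sum_mono) auto
  also have "\<dots> \<le> real (card S) * K"
    using K S by (auto intro: mult_right_mono)
  finally show ?thesis .
qed

text \<open>Compare both sides of \<open>A X = X A\<close> at an entry of \<open>X\<close> of maximal modulus.\<close>

lemma commuting_zero_diagonal_eq_zero:
  fixes A X :: "real mat"
  assumes A: "A \<in> carrier_mat m m" and X: "X \<in> carrier_mat m m" and comm: "A * X = X * A"
    and diag: "\<And>i. i < m \<Longrightarrow> X $$ (i, i) = 0"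
    and off: "\<And>i j. i < m \<Longrightarrow> j < m \<Longrightarrow> i \<noteq> j \<Longrightarrow> \<bar>A $$ (i, j)\<bar> \<le> \<eta>"
    and sep: "\<And>i j. i < m \<Longrightarrow> j < m \<Longrightarrow> i \<noteq> j \<Longrightarrow> 2 * real m * \<eta> < \<bar>A $$ (i, i) - A $$ (j, j)\<bar>"
  shows "X = 0\<^sub>m m m"
proof (rule ccontr)
  define \<mu> where "\<mu> = Max ((\<lambda>(i, j). \<bar>X $$ (i, j)\<bar>) ` ({..<m} \<times> {..<m}))"
  have \<mu>: "\<bar>X $$ (i, j)\<bar> \<le> \<mu>" if "i < m" "j < m" for i j
    unfolding \<mu>_def using that by (intro Max_ge) auto
  assume "X \<noteq> 0\<^sub>m m m"
  then obtain i j where ij: "i < m" "j < m" "X $$ (i, j) \<noteq> 0"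
    using X by (metis carrier_matD eq_matI index_zero_mat)
  then have "\<mu> \<in> (\<lambda>(i, j). \<bar>X $$ (i, j)\<bar>) ` ({..<m} \<times> {..<m})"
    unfolding \<mu>_def by (intro Max_in) auto
  then obtain a b where ab: "a < m" "b < m" "\<mu> = \<bar>X $$ (a, b)\<bar>" by auto
  have \<mu>_pos: "0 < \<mu>" using \<mu>[OF ij(1,2)] ij(3) by linarith
  then have "a \<noteq> b" using ab diag by auto
  then have \<eta>: "0 \<le> \<eta>" using off[OF ab(1,2)] by linarith
  have AX: "\<bar>(A * X) $$ (a, b) - A $$ (a, a) * X $$ (a, b)\<bar> \<le> real m * (\<eta> * \<mu>)"
  proof -
    have "(A * X) $$ (a, b) = (\<Sum>l<m. A $$ (a, l) * X $$ (l, b))"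
      using A X ab by (simp add: scalar_prod_def lessThan_atLeast0)
    moreover have "\<bar>A $$ (a, l) * X $$ (l, b)\<bar> \<le> \<eta> * \<mu>" if "l < m" "l \<noteq> a" for l
      unfolding abs_mult using off[of a l] \<mu>[of l b] ab that \<eta> by (intro mult_mono) auto
    ultimately show ?thesis
      using abs_sum_minus_term_le[of "{..<m}" a "\<eta> * \<mu>" "\<lambda>l. A $$ (a, l) * X $$ (l, b)"] ab \<eta> \<mu>_pos
      by simp
  qed
  have XA: "\<bar>(X * A) $$ (a, b) - X $$ (a, b) * A $$ (b, b)\<bar> \<le> real m * (\<eta> * \<mu>)"
  proof -
    have "(X * A) $$ (a, b) = (\<Sum>l<m. X $$ (a, l) * A $$ (l, b))"
      using A X ab by (simp add: scalar_prod_def lessThan_atLeast0)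
    moreover have "\<bar>X $$ (a, l) * A $$ (l, b)\<bar> \<le> \<eta> * \<mu>" if "l < m" "l \<noteq> b" for l
      unfolding abs_mult using off[of l b] \<mu>[of a l] ab that \<eta> \<mu>_pos
      by (subst mult.commute) (intro mult_mono, auto)
    ultimately show ?thesis
      using abs_sum_minus_term_le[of "{..<m}" b "\<eta> * \<mu>" "\<lambda>l. X $$ (a, l) * A $$ (l, b)"] ab \<eta> \<mu>_pos
      by simp
  qed
  have "(A $$ (a, a) - A $$ (b, b)) * X $$ (a, b) =
      ((X * A) $$ (a, b) - X $$ (a, b) * A $$ (b, b)) - ((A * X) $$ (a, b) - A $$ (a, a) * X $$ (a, b))"
    using comm by (simp add: algebra_simps)
  then have "\<bar>A $$ (a, a) - A $$ (b, b)\<bar> * \<mu> \<le> 2 * real m * \<eta> * \<mu>"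
    using AX XA ab(3) by (simp add: abs_mult)
  moreover have "2 * real m * \<eta> * \<mu> < \<bar>A $$ (a, a) - A $$ (b, b)\<bar> * \<mu>"
    using sep[OF ab(1,2) \<open>a \<noteq> b\<close>] \<mu>_pos by simp
  ultimately show False by linarith
qed

lemma SSP_if_separated_diagonal:
  fixes A :: "real mat"
  assumes A: "A \<in> carrier_mat m m"
    and off: "\<And>i j. i < m \<Longrightarrow> j < m \<Longrightarrow> i \<noteq> j \<Longrightarrow> \<bar>A $$ (i, j)\<bar> \<le> \<eta>"
    and sep: "\<And>i j. i < m \<Longrightarrow> j < m \<Longrightarrow> i \<noteq> j \<Longrightarrow> 2 * real m * \<eta> < \<bar>A $$ (i, i) - A $$ (j, j)\<bar>"
  shows "SSP A"
  unfolding SSP_def using A commuting_zero_diagonal_eq_zero[OF A _ _ _ off sep] by auto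

definition weighted_adjacency :: "nat \<Rightarrow> nat set set \<Rightarrow> (nat set \<Rightarrow> nat) \<Rightarrow> real \<Rightarrow> real mat" where
  "weighted_adjacency m E f t = Matrix.mat m m (\<lambda>(i, j). if {i, j} \<in> E then t ^ f {i, j} else 0)"

lemma weighted_adjacency_carrier [simp]: "weighted_adjacency m E f t \<in> carrier_mat m m"
  by (simp add: weighted_adjacency_def)

lemma weighted_adjacency_index:
  "i < m \<Longrightarrow> j < m \<Longrightarrow> weighted_adjacency m E f t $$ (i, j) = (if {i, j} \<in> E then t ^ f {i, j} else 0)"
  by (simp add: weighted_adjacency_def)

lemma simple_graph_edge_neq: "simple_graph m E \<Longrightarrow> {i, j} \<in> E \<Longrightarrow> i \<noteq> j"
  unfolding simple_graph_def by (auto simp: doubleton_eq_iff)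

lemma abs_weighted_adjacency_le:
  assumes "0 < t" "t \<le> 1" and f: "\<And>e. e \<in> E \<Longrightarrow> 1 \<le> f e" and "i < m" "j < m"
  shows "\<bar>weighted_adjacency m E f t $$ (i, j)\<bar> \<le> t"
  using assms power_decreasing[OF f, of "{i, j}" t] by (simp add: weighted_adjacency_index)

lemma diag_of_add_weighted_adjacency_in_M_fG:
  assumes G: "simple_graph m E" and t: "0 < t"
  shows "diag_of m d + weighted_adjacency m E f t \<in> M_fG m E f t"
proof -
  let ?A = "diag_of m d + weighted_adjacency m E f t"
  have loop: "{i} \<notin> E" for i using simple_graph_edge_neq[OF G, of i i] by auto
  have A: "?A = Matrix.mat m m (\<lambda>(i, j). if i = j then d i else if {i, j} \<in> E then t ^ f {i, j} else 0)"
    using loop by (auto simp: diag_of_def weighted_adjacency_def intro!: eq_matI)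
  show ?thesis
    unfolding A M_fG_def S_graph_def real_symmetric_def
    using simple_graph_edge_neq[OF G] t by (auto simp: insert_commute intro!: eq_matI)
qed

lemma diag_of_add_weighted_adjacency_index:
  assumes G: "simple_graph m E" and "i < m" "j < m"
  shows "(diag_of m d + weighted_adjacency m E f t) $$ (i, j) =
    (if i = j then d i else weighted_adjacency m E f t $$ (i, j))"
  using assms simple_graph_edge_neq[OF G, of i i]
  by (auto simp: diag_of_def weighted_adjacency_def)

lemma SSP_diag_of_add_weighted_adjacency:
  assumes G: "simple_graph m E" and t: "0 < t" "t \<le> 1" and f: "\<And>e. e \<in> E \<Longrightarrow> 1 \<le> f e"
    and sep: "\<And>a b. a < m \<Longrightarrow> b < m \<Longrightarrow> a \<noteq> b \<Longrightarrow> 2 * real m * t < \<bar>d a - d b\<bar>"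
  shows "SSP (diag_of m d + weighted_adjacency m E f t)"
  using abs_weighted_adjacency_le[OF t f] sep
  by (intro SSP_if_separated_diagonal[of _ m t]) (auto simp: diag_of_add_weighted_adjacency_index[OF G])

lemma frob_norm_diag_of_add_weighted_adjacency_le:
  assumes G: "simple_graph m E" and t: "0 < t" "t \<le> 1" "t \<le> r" and f: "\<And>e. e \<in> E \<Longrightarrow> 1 \<le> f e"
    and d: "\<And>j. j < m \<Longrightarrow> \<bar>d j - lam j\<bar> \<le> r"
  shows "frob_norm (diag_of m d + weighted_adjacency m E f t - diag_of m lam) \<le> real m * r"
proof (rule frob_norm_le)
  fix i j assume ij: "i < m" "j < m"
  show "\<bar>(diag_of m d + weighted_adjacency m E f t - diag_of m lam) $$ (i, j)\<bar> \<le> r"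
  proof (cases "i = j")
    case True
    then show ?thesis
      using ij d by (simp add: diag_of_add_weighted_adjacency_index[OF G] index_diag_of)
  next
    case False
    then show ?thesis
      using ij abs_weighted_adjacency_le[where E = E and f = f, OF t(1,2) f ij] t(3)
      by (simp add: diag_of_add_weighted_adjacency_index[OF G] index_diag_of)
  qed
qed (use t in \<open>auto simp: diag_of_def\<close>)

theorem lemma2p1:
  fixes m :: nat and lam :: "nat \<Rightarrow> real" and E :: "nat set set"
    and f :: "nat set \<Rightarrow> nat" and \<epsilon> :: real
  assumes incr: "\<And>i j. i < j \<Longrightarrow> j < m \<Longrightarrow> lam i < lam j"
    and graph: "simple_graph m E"
    and conn: "connected_graph m E"
    and fpos: "\<And>e. e \<in> E \<Longrightarrow> f e \<ge> 1"
    and eps: "\<epsilon> > 0"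
  shows "\<exists>t0 > 0. \<exists>A. A \<in> M_fG m E f t0 \<and> A \<in> E_Lambda m lam \<and> SSP A \<and>
           frob_norm (A - diag_of m lam) < \<epsilon>"
proof -
  have inj: "inj_on lam {..<m}"
    by (rule inj_onI) (metis incr lessThan_iff linorder_neqE_nat order_less_irrefl)
  obtain \<delta> where \<delta>: "0 < \<delta>" and gap: "\<And>a b. a < m \<Longrightarrow> b < m \<Longrightarrow> a \<noteq> b \<Longrightarrow> \<delta> \<le> \<bar>lam a - lam b\<bar>"
    using inj_on_min_gap[OF inj] by blast
  define r where "r = min (\<delta> / 4) (\<epsilon> / (real m + 1))"
  have r: "0 < r" "r \<le> \<delta> / 4" "real m * r < \<epsilon>"
    using \<delta> eps by (auto simp: r_def min_def field_simps)
  obtain \<eta> where "0 < \<eta>" and diagonal: "\<And>N. N \<in> carrier_mat m m \<Longrightarrow> \<forall>i<m. \<forall>j<m. \<bar>N $$ (i, j)\<bar> \<le> \<eta> \<Longrightarrow>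
      \<exists>d. (\<forall>j<m. \<bar>d j - lam j\<bar> \<le> r) \<and> (\<forall>i<m. poly (char_poly (diag_of m d + N)) (lam i) = 0)"
    using uniform_exists_diag_with_char_poly_roots[OF inj r(1)] by blast
  define t where "t = min (min \<eta> 1) (min r (\<delta> / (8 * (real m + 1))))"
  have t: "0 < t" "t \<le> \<eta>" "t \<le> 1" "t \<le> r" "t \<le> \<delta> / (8 * (real m + 1))"
    using \<open>0 < \<eta>\<close> r \<delta> by (auto simp: t_def)
  define N where "N = weighted_adjacency m E f t"
  obtain d where d: "\<And>j. j < m \<Longrightarrow> \<bar>d j - lam j\<bar> \<le> r"
    and roots: "\<And>i. i < m \<Longrightarrow> poly (char_poly (diag_of m d + N)) (lam i) = 0"
    using diagonal[of N] abs_weighted_adjacency_le[OF t(1,3) fpos] t(2) by (fastforce simp: N_def)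
  define A where "A = diag_of m d + N"
  have "A \<in> M_fG m E f t"
    unfolding A_def N_def by (rule diag_of_add_weighted_adjacency_in_M_fG[OF graph t(1)])
  moreover have "A \<in> E_Lambda m lam"
    using \<open>A \<in> M_fG m E f t\<close> char_poly_eq_prod_if_roots[of A m lam] inj roots
    by (auto simp: E_Lambda_def M_fG_def S_graph_def A_def)
  moreover have "SSP A"
  proof (unfold A_def N_def, rule SSP_diag_of_add_weighted_adjacency[OF graph t(1,3) fpos])
    fix a b assume ab: "a < m" "b < m" "a \<noteq> b"
    have "\<delta> / 2 \<le> \<bar>d a - d b\<bar>" using gap[OF ab] d[OF ab(1)] d[OF ab(2)] r(2) by linarith
    moreover have "2 * real m * t * 4 < t * (8 * (real m + 1))" using t(1) by (simp add: algebra_simps)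
    moreover have "t * (8 * (real m + 1)) \<le> \<delta>" using t(5) by (simp add: le_divide_eq)
    ultimately show "2 * real m * t < \<bar>d a - d b\<bar>" using \<delta> by linarith
  qed
  moreover have "frob_norm (A - diag_of m lam) < \<epsilon>"
    using frob_norm_diag_of_add_weighted_adjacency_le[where f = f and d = d and lam = lam, OF graph t(1,3,4) fpos d] r(3)
    by (simp add: A_def N_def)
  ultimately show ?thesis using t(1) by blast
qed

end
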